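(* For every intuitionistic formula $\varphi$ in $p_1,\dots,p_n$, every model $M$ and every $x\in M^s$, \[ M^s,x\models\varphi\iff M^s,x\models s(\varphi). \]
   Context: $F_{HA}(n)$ is the free Heyting algebra on $p_1,\dots,p_n$ (intuitionistic formulas modulo IPC-equivalence) and $F_{\wedge,\to}(n)$ the free implicative meet-semilattice on $p_1,\dots,p_n$ ($(\wedge,\to)$-formulas modulo IPC-equivalence). $F_{\wedge,\to}(n)$ is finite, hence a Heyting algebra with join $\varphi\veebar\psi=\bigwedge\{\chi\in F_{\wedge,\to}(n): \varphi\le\chi,\ \psi\le\chi\}$ and bottom $p_1\wedge\cdots\wedge p_n$. $s:F_{HA}(n)\to F_{\wedge,\to}(n)$ is the unique Heyting homomorphism with $s(p_i)=p_i$; concretely $s(\varphi)$ is obtained by replacing each $\vee$ by $\veebar$ and $\bot$ by $p_1\wedge\cdots\wedge p_n$; $s(\varphi)$ is taken to be any $(\wedge,\to)$-formula representing this class. Models are posets with an order-preserving colouring $c:M\to\{0,1\}^n$ (componentwise order) and intuitionistic Kripke semantics ($x\models p_i$ iff $c(x)_i=1$). A point $x$ is separated if for some variable $q$, $x\not\models q$ but all $y>x$ satisfy $q$. $M^s$ is the set of separated points with the restricted order and colouring, regarded as a model in its own right. *)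

theory Defs
  imports Main
begin

text \<open>Intuitionistic propositional formulas. Variable Var i (i < n) stands for p_(i+1).\<close>
datatype form = Var nat | Bot | And form form | Or form form | Imp form form

fun vars :: "form \<Rightarrow> nat set" where
  "vars (Var i) = {i}"
| "vars Bot = {}"
| "vars (And a b) = vars a \<union> vars b"
| "vars (Or a b) = vars a \<union> vars b"
| "vars (Imp a b) = vars a \<union> vars b"

fun impl_form :: "form \<Rightarrow> bool" where
  "impl_form (Var i) = True"
| "impl_form Bot = False"
| "impl_form (And a b) = (impl_form a \<and> impl_form b)"
| "impl_form (Or a b) = False"
| "impl_form (Imp a b) = (impl_form a \<and> impl_form b)"

inductive ipc :: "form \<Rightarrow> bool" where
  K: "ipc (Imp A (Imp B A))"
| S: "ipc (Imp (Imp A (Imp B C)) (Imp (Imp A B) (Imp A C)))"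
| AndE1: "ipc (Imp (And A B) A)"
| AndE2: "ipc (Imp (And A B) B)"
| AndI: "ipc (Imp A (Imp B (And A B)))"
| OrI1: "ipc (Imp A (Or A B))"
| OrI2: "ipc (Imp B (Or A B))"
| OrE: "ipc (Imp (Imp A C) (Imp (Imp B C) (Imp (Or A B) C)))"
| BotE: "ipc (Imp Bot A)"
| MP: "ipc (Imp A B) \<Longrightarrow> ipc A \<Longrightarrow> ipc B"

definition ipc_equiv :: "form \<Rightarrow> form \<Rightarrow> bool" where
  "ipc_equiv A B \<longleftrightarrow> ipc (Imp A B) \<and> ipc (Imp B A)"

definition impl_n :: "nat \<Rightarrow> form \<Rightarrow> bool" where
  "impl_n n A \<longleftrightarrow> impl_form A \<and> vars A \<subseteq> {..<n}"

fun big_and :: "nat \<Rightarrow> form" where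
  "big_and 0 = Var 0"
| "big_and (Suc 0) = Var 0"
| "big_and (Suc k) = And (big_and k) (Var k)"

text \<open>The join in F_{and,imp}(n): chi represents the least upper bound of a and b,
  i.e. the meet of all upper bounds in F_{and,imp}(n).\<close>
definition is_join :: "nat \<Rightarrow> form \<Rightarrow> form \<Rightarrow> form \<Rightarrow> bool" where
  "is_join n a b chi \<longleftrightarrow> impl_n n chi \<and>
     (\<forall>th. impl_n n th \<longrightarrow> (ipc (Imp chi th) \<longleftrightarrow> ipc (Imp a th) \<and> ipc (Imp b th)))"

text \<open>s_rep n phi psi: psi is an (and,imp)-formula representing s(phi) in F_{and,imp}(n).\<close>
inductive s_rep :: "nat \<Rightarrow> form \<Rightarrow> form \<Rightarrow> bool" for n where
  sVar: "i < n \<Longrightarrow> impl_n n chi \<Longrightarrow> ipc_equiv chi (Var i) \<Longrightarrow> s_rep n (Var i) chi"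
| sBot: "impl_n n chi \<Longrightarrow> ipc_equiv chi (big_and n) \<Longrightarrow> s_rep n Bot chi"
| sAnd: "s_rep n a \<alpha> \<Longrightarrow> s_rep n b \<beta> \<Longrightarrow> impl_n n chi \<Longrightarrow> ipc_equiv chi (And \<alpha> \<beta>)
          \<Longrightarrow> s_rep n (And a b) chi"
| sImp: "s_rep n a \<alpha> \<Longrightarrow> s_rep n b \<beta> \<Longrightarrow> impl_n n chi \<Longrightarrow> ipc_equiv chi (Imp \<alpha> \<beta>)
          \<Longrightarrow> s_rep n (Imp a b) chi"
| sOr: "s_rep n a \<alpha> \<Longrightarrow> s_rep n b \<beta> \<Longrightarrow> is_join n \<alpha> \<beta> chi \<Longrightarrow> s_rep n (Or a b) chi"

definition model :: "nat \<Rightarrow> 'a set \<Rightarrow> ('a \<Rightarrow> 'a \<Rightarrow> bool) \<Rightarrow> ('a \<Rightarrow> nat \<Rightarrow> bool) \<Rightarrow> bool" where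
  "model n W le c \<longleftrightarrow>
     (\<forall>x\<in>W. le x x) \<and>
     (\<forall>x\<in>W. \<forall>y\<in>W. le x y \<longrightarrow> le y x \<longrightarrow> x = y) \<and>
     (\<forall>x\<in>W. \<forall>y\<in>W. \<forall>z\<in>W. le x y \<longrightarrow> le y z \<longrightarrow> le x z) \<and>
     (\<forall>x\<in>W. \<forall>y\<in>W. le x y \<longrightarrow> (\<forall>i<n. c x i \<longrightarrow> c y i))"

fun sat :: "'a set \<Rightarrow> ('a \<Rightarrow> 'a \<Rightarrow> bool) \<Rightarrow> ('a \<Rightarrow> nat \<Rightarrow> bool) \<Rightarrow> 'a \<Rightarrow> form \<Rightarrow> bool" where
  "sat W le c x (Var i) = c x i"
| "sat W le c x Bot = False"
| "sat W le c x (And a b) = (sat W le c x a \<and> sat W le c x b)"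
| "sat W le c x (Or a b) = (sat W le c x a \<or> sat W le c x b)"
| "sat W le c x (Imp a b) = (\<forall>y\<in>W. le x y \<longrightarrow> sat W le c y a \<longrightarrow> sat W le c y b)"

definition separated :: "nat \<Rightarrow> 'a set \<Rightarrow> ('a \<Rightarrow> 'a \<Rightarrow> bool) \<Rightarrow> ('a \<Rightarrow> nat \<Rightarrow> bool) \<Rightarrow> 'a \<Rightarrow> bool" where
  "separated n W le c x \<longleftrightarrow> (\<exists>q<n. \<not> c x q \<and> (\<forall>y\<in>W. le x y \<and> y \<noteq> x \<longrightarrow> c y q))"

text \<open>M^s: separated points of W, with restricted order and colouring.\<close>
definition sep_points :: "nat \<Rightarrow> 'a set \<Rightarrow> ('a \<Rightarrow> 'a \<Rightarrow> bool) \<Rightarrow> ('a \<Rightarrow> nat \<Rightarrow> bool) \<Rightarrow> 'a set" where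
  "sep_points n W le c = {x\<in>W. separated n W le c x}"

end

theory Submission
  imports Defs
begin

(* Soundness of IPC for Kripke semantics shows that IPC-equivalent formulas in
   the variables p_1..p_n are true at the same points of any submodel, in particular of M^s.
   So s(phi) can be replaced by the structural translation of phi in which each connective is
   interpreted in F_{and,imp}(n), and it suffices to check the two non-homomorphic clauses:
   - bottom: s(Bot) = p_1 & ... & p_n fails at a separated point, since some p_q fails there;
   - join: if x |= a (+) b but x |/= a, x |/= b for a separated x with witness q, then
     x |= (a -> q) & (b -> q) (every strictly larger point satisfies q), and
     (a -> q) & (b -> q) -> q is an upper bound of a and b in F_{and,imp}(n), so it is
     implied by a (+) b; hence x |= q, contradicting the choice of q. *)

lemma ipc_id: "ipc (Imp A A)"
proof -
  have "ipc (Imp (Imp A (Imp (Imp A A) A)) (Imp (Imp A (Imp A A)) (Imp A A)))" by (rule ipc.S)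
  then have "ipc (Imp (Imp A (Imp A A)) (Imp A A))" using ipc.K ipc.MP by blast
  then show ?thesis using ipc.K ipc.MP by blast
qed

inductive der :: "form set \<Rightarrow> form \<Rightarrow> bool" for G where
  hyp: "A \<in> G \<Longrightarrow> der G A"
| ax: "ipc A \<Longrightarrow> der G A"
| mp: "der G (Imp A B) \<Longrightarrow> der G A \<Longrightarrow> der G B"

lemma deduction: "der (insert A D) B \<Longrightarrow> der D (Imp A B)"
proof (induction rule: der.induct)
  case (hyp C)
  then show ?case by (metis der.ax der.hyp der.mp insert_iff ipc.K ipc_id)
next
  case (ax C)
  then show ?case by (meson der.ax der.mp ipc.K)
next
  case (mp C E)
  then show ?case by (meson der.ax der.mp ipc.S)
qed

lemma der_empty_ipc: "der {} A \<Longrightarrow> ipc A"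
  by (induction rule: der.induct) (auto intro: ipc.MP)

lemma ipc_exchange:
  assumes "ipc (Imp C (Imp A B))"
  shows "ipc (Imp A (Imp C B))"
proof -
  have "der {C, A} (Imp A B)" using assms by (meson der.ax der.hyp der.mp insertCI)
  then have "der {C, A} B" by (meson der.hyp der.mp insertCI)
  then have "der {A} (Imp C B)" by (rule deduction)
  then have "der {} (Imp A (Imp C B))" by (rule deduction)
  then show ?thesis by (rule der_empty_ipc)
qed

lemma join_bound:
  "ipc (Imp a (Imp (And (Imp a q) (Imp b q)) q))"
  "ipc (Imp b (Imp (And (Imp a q) (Imp b q)) q))"
  by (rule ipc_exchange, rule ipc.AndE1) (rule ipc_exchange, rule ipc.AndE2)

text \<open>Unlike
  \<open>model\<close>, this needs no antisymmetry and constrains all variables, which is the form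
  needed by the soundness induction (modus ponens may pass through arbitrary formulas).\<close>
definition kripke_model :: "'a set \<Rightarrow> ('a \<Rightarrow> 'a \<Rightarrow> bool) \<Rightarrow> ('a \<Rightarrow> nat \<Rightarrow> bool) \<Rightarrow> bool" where
  "kripke_model W le c \<longleftrightarrow>
     (\<forall>x\<in>W. le x x) \<and>
     (\<forall>x\<in>W. \<forall>y\<in>W. \<forall>z\<in>W. le x y \<longrightarrow> le y z \<longrightarrow> le x z) \<and>
     (\<forall>x\<in>W. \<forall>y\<in>W. le x y \<longrightarrow> (\<forall>i. c x i \<longrightarrow> c y i))"

lemma kripke_modelD:
  assumes "kripke_model W le c"
  shows kripke_refl: "x \<in> W \<Longrightarrow> le x x"
    and kripke_trans: "x \<in> W \<Longrightarrow> y \<in> W \<Longrightarrow> z \<in> W \<Longrightarrow> le x y \<Longrightarrow> le y z \<Longrightarrow> le x z"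
    and kripke_mono: "x \<in> W \<Longrightarrow> y \<in> W \<Longrightarrow> le x y \<Longrightarrow> c x i \<Longrightarrow> c y i"
  using assms unfolding kripke_model_def by blast+

lemma persistence:
  assumes M: "kripke_model W le c" and "x \<in> W" "y \<in> W" "le x y" "sat W le c x A"
  shows "sat W le c y A"
  using assms(2-)
proof (induction A arbitrary: x y)
  case (Var i)
  then show ?case using kripke_mono[OF M] by simp
next
  case (Imp A1 A2)
  have "le x z" if "z \<in> W" "le y z" for z
    using kripke_trans[OF M] Imp.prems(1,2,3) that by blast
  then show ?case using Imp.prems(4) by simp
qed auto

theorem soundness:
  assumes M: "kripke_model W le c"
  shows "ipc A \<Longrightarrow> x \<in> W \<Longrightarrow> sat W le c x A"
proof (induction arbitrary: x rule: ipc.induct)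
  note refl = kripke_refl[OF M]
  note trans = kripke_trans[OF M]
  note persist = persistence[OF M]
  {
    case (K A B)
    then show ?case by (auto intro: persist)
  next
    case (AndI A B)
    then show ?case by (auto intro: persist)
  next
    case (S A B C)
    show ?case
    proof (simp only: sat.simps, intro ballI impI)
      fix y z w
      assume y: "y \<in> W" "le x y"
        and hABC: "\<forall>u\<in>W. le y u \<longrightarrow> sat W le c u A \<longrightarrow>
                     (\<forall>v\<in>W. le u v \<longrightarrow> sat W le c v B \<longrightarrow> sat W le c v C)"
        and z: "z \<in> W" "le y z" and hAB: "\<forall>u\<in>W. le z u \<longrightarrow> sat W le c u A \<longrightarrow> sat W le c u B"
        and w: "w \<in> W" "le z w" "sat W le c w A"
      have "le y w" using trans y z w by blast
      moreover have "sat W le c w B" using hAB w by blast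
      ultimately show "sat W le c w C" using hABC w refl by blast
    qed
  next
    case (OrE A C B)
    show ?case
    proof (simp only: sat.simps, intro ballI impI)
      fix y z w
      assume y: "y \<in> W" "le x y" and hAC: "\<forall>u\<in>W. le y u \<longrightarrow> sat W le c u A \<longrightarrow> sat W le c u C"
        and z: "z \<in> W" "le y z" and hBC: "\<forall>u\<in>W. le z u \<longrightarrow> sat W le c u B \<longrightarrow> sat W le c u C"
        and w: "w \<in> W" "le z w" "sat W le c w A \<or> sat W le c w B"
      have "le y w" using trans y z w by blast
      then show "sat W le c w C" using hAC hBC w by blast
    qed
  next
    case (MP A B)
    then show ?case using refl by auto
  }
qed auto

definition truncate :: "nat \<Rightarrow> ('a \<Rightarrow> nat \<Rightarrow> bool) \<Rightarrow> 'a \<Rightarrow> nat \<Rightarrow> bool" where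
  "truncate n c x i \<longleftrightarrow> i < n \<and> c x i"

lemma sat_truncate: "vars A \<subseteq> {..<n} \<Longrightarrow> sat V le (truncate n c) x A = sat V le c x A"
  by (induction A arbitrary: x) (auto simp: truncate_def)

lemma kripke_model_truncate:
  "model n W le c \<Longrightarrow> V \<subseteq> W \<Longrightarrow> kripke_model V le (truncate n c)"
  unfolding model_def kripke_model_def truncate_def by blast

lemma ipc_imp_sat:
  assumes "model n W le c" "V \<subseteq> W" "ipc (Imp A B)"
    and "vars A \<subseteq> {..<n}" "vars B \<subseteq> {..<n}" "x \<in> V" "sat V le c x A"
  shows "sat V le c x B"
proof -
  have KM: "kripke_model V le (truncate n c)" using assms(1,2) by (rule kripke_model_truncate)
  have "sat V le (truncate n c) x (Imp A B)" using soundness[OF KM assms(3,6)] .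
  moreover have "le x x" using kripke_refl[OF KM assms(6)] .
  ultimately show ?thesis using assms(4-7) sat_truncate[of _ n V le c] by auto
qed

lemma ipc_equiv_sat:
  assumes "model n W le c" "V \<subseteq> W" "ipc_equiv A B"
    and "vars A \<subseteq> {..<n}" "vars B \<subseteq> {..<n}" "x \<in> V"
  shows "sat V le c x A \<longleftrightarrow> sat V le c x B"
  using assms ipc_imp_sat[of n W le c V] unfolding ipc_equiv_def by blast

lemma s_rep_impl: "s_rep n a b \<Longrightarrow> impl_n n b"
  by (induction rule: s_rep.induct) (auto simp: is_join_def)

lemma vars_big_and: "vars (big_and n) \<subseteq> {..<max n 1}"
  by (induction n rule: big_and.induct) auto

lemma sat_big_and: "n \<ge> 1 \<Longrightarrow> sat W le c x (big_and n) \<longleftrightarrow> (\<forall>i<n. c x i)"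
  by (induction n rule: big_and.induct) (auto simp: less_Suc_eq)

lemma separated_not_big_and:
  assumes "n \<ge> 1" "separated n W le c x"
  shows "\<not> sat V le c x (big_and n)"
proof -
  obtain q where "q < n" "\<not> c x q" using assms(2) unfolding separated_def by blast
  then show ?thesis using sat_big_and[OF assms(1), of V le c x] by blast
qed

lemma separated_imp_witness:
  assumes "V \<subseteq> W" "x \<in> V" "\<forall>y\<in>W. le x y \<and> y \<noteq> x \<longrightarrow> c y q" "\<not> sat V le c x a"
  shows "sat V le c x (Imp a (Var q))"
  using assms by (auto simp only: sat.simps subset_iff)

lemma s_rep_sat_sep_points:
  assumes n1: "n \<ge> 1" and M: "model n W le c" and rep: "s_rep n \<phi> \<psi>"
  shows "\<forall>x\<in>sep_points n W le c.
           sat (sep_points n W le c) le c x \<phi> \<longleftrightarrow> sat (sep_points n W le c) le c x \<psi>"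
  using rep
proof (induction rule: s_rep.induct)
  let ?S = "sep_points n W le c"
  have sub: "?S \<subseteq> W" by (auto simp: sep_points_def)
  have transfer: "sat ?S le c x chi \<longleftrightarrow> sat ?S le c x X"
    if "ipc_equiv chi X" "impl_n n chi" "vars X \<subseteq> {..<n}" "x \<in> ?S" for chi X x
    using ipc_equiv_sat[OF M sub that(1) _ that(3,4)] that(2) by (simp add: impl_n_def)
  have vars_rep: "vars \<beta> \<subseteq> {..<n}" if "s_rep n a \<beta>" for a \<beta>
    using s_rep_impl[OF that] by (simp add: impl_n_def)
  {
    case (sVar i chi)
    then show ?case using transfer[of chi "Var i"] by simp
  next
    case (sBot chi)
    have vb: "vars (big_and n) \<subseteq> {..<n}" using vars_big_and[of n] n1 by (simp add: max_def)
    have "\<not> sat ?S le c x chi" if x: "x \<in> ?S" for x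
    proof -
      have "separated n W le c x" using x by (simp add: sep_points_def)
      then have "\<not> sat ?S le c x (big_and n)" by (rule separated_not_big_and[OF n1])
      then show ?thesis using transfer[OF sBot(2,1) vb x] by simp
    qed
    then show ?case by simp
  next
    case (sAnd a \<alpha> b \<beta> chi)
    have "vars (And \<alpha> \<beta>) \<subseteq> {..<n}" using vars_rep sAnd.hyps(1,2) by simp
    then show ?case using transfer[OF sAnd.hyps(4,3)] sAnd.IH by simp
  next
    case (sImp a \<alpha> b \<beta> chi)
    have "vars (Imp \<alpha> \<beta>) \<subseteq> {..<n}" using vars_rep sImp.hyps(1,2) by simp
    moreover have "sat ?S le c x (Imp a b) \<longleftrightarrow> sat ?S le c x (Imp \<alpha> \<beta>)" for x
      using sImp.IH by auto
    ultimately show ?case using transfer[OF sImp.hyps(4,3)] by simp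
  next
    case (sOr a \<alpha> b \<beta> chi)
    have i\<alpha>: "impl_n n \<alpha>" and i\<beta>: "impl_n n \<beta>"
      using s_rep_impl[OF sOr.hyps(1)] s_rep_impl[OF sOr.hyps(2)] .
    have ic: "impl_n n chi"
      and upper: "\<And>th. impl_n n th \<Longrightarrow> ipc (Imp chi th) \<longleftrightarrow> ipc (Imp \<alpha> th) \<and> ipc (Imp \<beta> th)"
      using sOr.hyps(3) unfolding is_join_def by auto
    note imp = ipc_imp_sat[OF M sub]
    have vs: "vars \<alpha> \<subseteq> {..<n}" "vars \<beta> \<subseteq> {..<n}" "vars chi \<subseteq> {..<n}"
      using i\<alpha> i\<beta> ic by (simp_all add: impl_n_def)
    have join: "sat ?S le c x chi \<longleftrightarrow> sat ?S le c x \<alpha> \<or> sat ?S le c x \<beta>" if x: "x \<in> ?S" for x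
    proof
      have "ipc (Imp \<alpha> chi)" "ipc (Imp \<beta> chi)" using upper[OF ic] ipc_id by auto
      then show "sat ?S le c x \<alpha> \<or> sat ?S le c x \<beta> \<Longrightarrow> sat ?S le c x chi"
        using imp vs x by blast
    next
      assume xc: "sat ?S le c x chi"
      show "sat ?S le c x \<alpha> \<or> sat ?S le c x \<beta>"
      proof (rule ccontr)
        assume neither: "\<not> (sat ?S le c x \<alpha> \<or> sat ?S le c x \<beta>)"
        from x obtain q where q: "q < n" "\<not> c x q" "\<forall>y\<in>W. le x y \<and> y \<noteq> x \<longrightarrow> c y q"
          by (auto simp: sep_points_def separated_def)
        define th where "th = Imp (And (Imp \<alpha> (Var q)) (Imp \<beta> (Var q))) (Var q)"
        have ith: "impl_n n th" using i\<alpha> i\<beta> q(1) by (auto simp: impl_n_def th_def)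
        have "ipc (Imp chi th)" using upper[OF ith] join_bound unfolding th_def by blast
        then have "sat ?S le c x th" using imp[OF _ vs(3) _ x xc] ith by (simp add: impl_n_def)
        moreover have "sat ?S le c x (Imp \<alpha> (Var q))" "sat ?S le c x (Imp \<beta> (Var q))"
          using separated_imp_witness[of ?S W x le c q] sub x q(3) neither by blast+
        moreover have "le x x" using M sub x unfolding model_def by blast
        ultimately have "c x q" using x unfolding th_def by simp
        then show False using q(2) by simp
      qed
    qed
    then show ?case using sOr.IH by simp
  }
qed

theorem theorem3p18:
  fixes n :: nat and W :: "'a set" and le :: "'a \<Rightarrow> 'a \<Rightarrow> bool" and c :: "'a \<Rightarrow> nat \<Rightarrow> bool"
    and \<phi> \<psi> :: form and x :: 'a
  assumes "n \<ge> 1"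
    and "vars \<phi> \<subseteq> {..<n}"
    and "s_rep n \<phi> \<psi>"
    and "model n W le c"
    and "x \<in> sep_points n W le c"
  shows "sat (sep_points n W le c) le c x \<phi> \<longleftrightarrow> sat (sep_points n W le c) le c x \<psi>"
  using s_rep_sat_sep_points[OF assms(1,4,3)] assms(5) by blast

end
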